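(* Let $l$ and $m$ be positive integers, let $n = 2^m-1$, let $\pi : (\mathbb Z_2^m)^* \to \mathbb Z_{n}$ be a bijection, let $q\equiv 1\pmod{2n}$ be a prime power, let $\rho$ be a primitive element of $\mathbb F_q$, let $\Gamma = \operatorname{Cay}(G_{l,m,q},S(\pi))$ and let $v$ be a vertex of $\Gamma$. Then in the subgraph of $\Gamma$ induced on $\Gamma(v)$, every vertex $v+s$ with $s\in S_0$ has valency $2^m l-2$, and for each $g \in (\mathbb Z_2^m)^*$ every vertex $v+s$ with $s\in S_{g,\pi}$ has valency $$\sum_{\substack{h \in (\mathbb Z_2^m)^* \\ h \ne g}} c^n_q\big(\pi(h-g)-\pi(g),\ \pi(h)-\pi(g)\big).$$
   Context: For an additive group $A$, $A^*=A\setminus\{0\}$. $G_{l,m,q} = \mathbb Z_l \oplus \mathbb Z_2^m \oplus \mathbb F_q$. $S_0 = \{(g,0) : g \in (\mathbb Z_l \oplus \mathbb Z_2^m)^*\}$; $S_{z,\pi} = \{(0,z,\rho^j) : j\in\mathbb Z,\ j \equiv \pi(z) \pmod{n}\}$ for $z\in(\mathbb Z_2^m)^*$; $S(\pi) = S_0 \cup \bigcup_z S_{z,\pi}$. $\operatorname{Cay}(G_{l,m,q},S(\pi))$ has vertex set $G_{l,m,q}$, $x\sim y$ iff $y-x\in S(\pi)$; $\Gamma(v)$ is the set of neighbours of $v$. Cyclotomic classes and numbers: write $q = 2nr+1$; for $i \in \mathbb Z_n$, $C^n_q(i) = \{\rho^{nj+i} : 0\le j\le 2r-1\}$, and for $a,b\in\mathbb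 Z_n$, $c^n_q(a,b) = |(C^n_q(a)+1)\cap C^n_q(b)|$ (arithmetic on indices is in $\mathbb Z_n$). *)

theory Defs
  imports "HOL-Number_Theory.Cong" "HOL-Library.Cardinality"
begin

text \<open>Z_2^m is modelled as subsets of {0..<m} (characteristic vectors), with
  addition = symmetric difference; zero = {}.\<close>

definition Z2m :: "nat \<Rightarrow> nat set set" where
  "Z2m m = {z. z \<subseteq> {..<m}}"

definition Z2m_star :: "nat \<Rightarrow> nat set set" where
  "Z2m_star m = Z2m m - {{}}"

definition zadd :: "nat set \<Rightarrow> nat set \<Rightarrow> nat set" where
  "zadd z w = (z - w) \<union> (w - z)"

definition Gset :: "nat \<Rightarrow> nat \<Rightarrow> (int \<times> nat set \<times> 'a) set" where
  "Gset l m = {(a, z, x). 0 \<le> a \<and> a < int l \<and> z \<in> Z2m m}"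

fun gadd :: "nat \<Rightarrow> (int \<times> nat set \<times> 'a::ab_group_add) \<Rightarrow> (int \<times> nat set \<times> 'a) \<Rightarrow> (int \<times> nat set \<times> 'a)" where
  "gadd l (a, z, x) (b, w, y) = ((a + b) mod int l, zadd z w, x + y)"

fun gsub :: "nat \<Rightarrow> (int \<times> nat set \<times> 'a::ab_group_add) \<Rightarrow> (int \<times> nat set \<times> 'a) \<Rightarrow> (int \<times> nat set \<times> 'a)" where
  "gsub l (a, z, x) (b, w, y) = ((a - b) mod int l, zadd z w, x - y)"

definition S0 :: "nat \<Rightarrow> nat \<Rightarrow> (int \<times> nat set \<times> 'a::zero) set" where
  "S0 l m = {(a, z, 0) | a z. 0 \<le> a \<and> a < int l \<and> z \<in> Z2m m \<and> (a, z) \<noteq> (0, {})}"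

definition Szpi :: "nat \<Rightarrow> (nat set \<Rightarrow> nat) \<Rightarrow> 'a::division_ring \<Rightarrow> nat set \<Rightarrow> (int \<times> nat set \<times> 'a) set" where
  "Szpi m \<pi> \<rho> z = {(0, z, \<rho> powi j) | j. [j = int (\<pi> z)] (mod int (2 ^ m - 1))}"

definition Spi :: "nat \<Rightarrow> nat \<Rightarrow> (nat set \<Rightarrow> nat) \<Rightarrow> 'a::division_ring \<Rightarrow> (int \<times> nat set \<times> 'a) set" where
  "Spi l m \<pi> \<rho> = S0 l m \<union> (\<Union>z \<in> Z2m_star m. Szpi m \<pi> \<rho> z)"

definition cay_adj :: "nat \<Rightarrow> nat \<Rightarrow> (nat set \<Rightarrow> nat) \<Rightarrow> 'a::division_ring
    \<Rightarrow> (int \<times> nat set \<times> 'a) \<Rightarrow> (int \<times> nat set \<times> 'a) \<Rightarrow> bool" where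
  "cay_adj l m \<pi> \<rho> x y \<longleftrightarrow> x \<in> Gset l m \<and> y \<in> Gset l m \<and> gsub l y x \<in> Spi l m \<pi> \<rho>"

definition nbhd :: "nat \<Rightarrow> nat \<Rightarrow> (nat set \<Rightarrow> nat) \<Rightarrow> 'a::division_ring
    \<Rightarrow> (int \<times> nat set \<times> 'a) \<Rightarrow> (int \<times> nat set \<times> 'a) set" where
  "nbhd l m \<pi> \<rho> v = {y. cay_adj l m \<pi> \<rho> v y}"

definition induced_deg :: "nat \<Rightarrow> nat \<Rightarrow> (nat set \<Rightarrow> nat) \<Rightarrow> 'a::division_ring
    \<Rightarrow> (int \<times> nat set \<times> 'a) \<Rightarrow> (int \<times> nat set \<times> 'a) \<Rightarrow> nat" where
  "induced_deg l m \<pi> \<rho> v u = card {w \<in> nbhd l m \<pi> \<rho> v. cay_adj l m \<pi> \<rho> u w}"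

definition cyc_class :: "nat \<Rightarrow> 'a::{field,finite} \<Rightarrow> nat \<Rightarrow> 'a set" where
  "cyc_class n \<rho> i = (let r = (CARD('a) - 1) div (2 * n) in {\<rho> ^ (n * j + i) | j. j < 2 * r})"

definition cyc_num :: "nat \<Rightarrow> 'a::{field,finite} \<Rightarrow> nat \<Rightarrow> nat \<Rightarrow> nat" where
  "cyc_num n \<rho> a b = card (((\<lambda>x. x + 1) ` cyc_class n \<rho> a) \<inter> cyc_class n \<rho> b)"

end

theory Submission
  imports Defs
begin

text \<open>Translation by \<open>v\<close> is a graph automorphism, so the valency of \<open>v + s\<close> in the subgraph
  induced on \<open>\<Gamma>(v)\<close> is the number of \<open>t \<in> S(\<pi>)\<close> with \<open>t - s \<in> S(\<pi>)\<close>. An element of \<open>S(\<pi>)\<close>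
  lies in \<open>S\<^sub>0\<close> iff its \<open>\<bbbF>\<^sub>q\<close>-coordinate vanishes, and \<open>(0, z, y) \<in> S(\<pi>)\<close> iff \<open>y\<close> lies
  in the cyclotomic class \<open>C(\<pi>(z))\<close>; since \<open>\<pi>\<close> is injective and the classes are disjoint,
  no \<open>t \<in> S\<^sub>z\<close> survives a shift by \<open>s \<in> S\<^sub>0\<close>, leaving \<open>S\<^sub>0 - {s}\<close>. For \<open>s = (0, g, y\<^sub>0)\<close>
  with \<open>y\<^sub>0 \<in> C(\<pi>(g))\<close>, no element of \<open>S\<^sub>0\<close> survives because \<open>-1 \<in> C(0)\<close> (as \<open>2n | q - 1\<close>),
  and \<open>(0, h, y)\<close> survives iff \<open>h \<noteq> g\<close>, \<open>y \<in> C(\<pi>(h))\<close> and \<open>y - y\<^sub>0 \<in> C(\<pi>(h + g))\<close>.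
  Dividing by \<open>y\<^sub>0\<close> turns the number of such \<open>y\<close> into a cyclotomic number.\<close>

lemma finite_field_power_card_minus_one:
  fixes x :: "'a::{field,finite}"
  assumes "x \<noteq> 0"
  shows "x ^ (CARD('a) - 1) = 1"
proof -
  define U where "U = (UNIV::'a set) - {0}"
  have inj: "inj_on ((*) x) U" using assms by (auto simp: inj_on_def)
  have "(*) x ` U = U"
  proof
    show "(*) x ` U \<subseteq> U" using assms by (auto simp: U_def)
    show "U \<subseteq> (*) x ` U"
    proof
      fix y assume "y \<in> U"
      then have "y = x * (y / x)" "y / x \<in> U" using assms by (auto simp: U_def)
      then show "y \<in> (*) x ` U" by blast
    qed
  qed
  then have "prod id U = prod ((*) x) U" using prod.reindex[OF inj] by simp
  also have "\<dots> = x ^ card U * prod id U" by (simp add: prod.distrib)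
  finally have "x ^ card U = 1" by (simp add: U_def)
  then show ?thesis by (simp add: U_def card_Diff_singleton)
qed

lemma add_mod_eq_iff:
  fixes a b j n :: nat
  assumes "a < n" "b < n" "j < n"
  shows "(a + b) mod n = j \<longleftrightarrow> b = (j + n - a) mod n"
  using assms by (cases "a + b < n"; cases "j < a") (auto simp: mod_if)

lemma mod_diff_eq_0_iff:
  fixes b c l :: int
  assumes "0 \<le> b" "b < l" "0 \<le> c" "c < l"
  shows "(c - b) mod l = 0 \<longleftrightarrow> c = b"
proof
  assume "(c - b) mod l = 0"
  then have "c mod l = b mod l" by (simp add: mod_eq_dvd_iff dvd_eq_mod_eq_0)
  then show "c = b" using assms by simp
qed simp

locale cyclotomy =
  fixes n :: nat and \<rho> :: "'a::{field,finite}" and N :: nat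
  assumes N_eq: "N = CARD('a) - 1" and n_pos: "n > 0" and dvd_card: "2 * n dvd N"
    and generator: "\<forall>x::'a. x \<noteq> 0 \<longrightarrow> (\<exists>k::nat. x = \<rho> ^ k)"
begin

lemma two_n_le_N: "N \<ge> 2 * n"
proof -
  have "card {0::'a, 1} \<le> CARD('a)" by (rule card_mono) auto
  then show ?thesis using dvd_card N_eq by (simp add: dvd_imp_le)
qed

lemma n_dvd_N: "n dvd N"
  using dvd_card by (meson dvd_mult_right)

lemma rho_nonzero: "\<rho> \<noteq> 0"
proof
  assume "\<rho> = 0"
  then have "UNIV \<subseteq> {0, 1::'a}"
    using generator by (auto simp: power_0_left split: if_splits)
  then have "CARD('a) \<le> card {0, 1::'a}" by (intro card_mono) auto
  also have "\<dots> \<le> 2" by (simp add: card_insert_if)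
  finally show False using two_n_le_N n_pos N_eq by linarith
qed

lemma power_N: "\<rho> ^ N = 1"
  using finite_field_power_card_minus_one[OF rho_nonzero] N_eq by simp

lemma power_mod_N: "\<rho> ^ (k mod N) = \<rho> ^ k"
proof -
  have "\<rho> ^ k = \<rho> ^ (k mod N) * (\<rho> ^ N) ^ (k div N)"
    by (metis div_mult_mod_eq mult.commute power_add power_mult)
  then show ?thesis by (simp add: power_N)
qed

lemma inj_on_power: "inj_on (\<lambda>k. \<rho> ^ k) {..<N}"
proof -
  have "(\<lambda>k. \<rho> ^ k) ` {..<N} = UNIV - {0}"
  proof
    show "(\<lambda>k. \<rho> ^ k) ` {..<N} \<subseteq> UNIV - {0}" using rho_nonzero by auto
    show "UNIV - {0} \<subseteq> (\<lambda>k. \<rho> ^ k) ` {..<N}"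
    proof
      fix x assume "x \<in> (UNIV::'a set) - {0}"
      then obtain k where "x = \<rho> ^ (k mod N)" using generator power_mod_N by auto
      moreover have "k mod N < N" using two_n_le_N n_pos by simp
      ultimately show "x \<in> (\<lambda>k. \<rho> ^ k) ` {..<N}" by blast
    qed
  qed
  then have "card ((\<lambda>k. \<rho> ^ k) ` {..<N}) = card {..<N}" by (simp add: N_eq card_Diff_singleton)
  then show ?thesis by (simp add: eq_card_imp_inj_on)
qed

lemma power_eq_power_iff: "\<rho> ^ a = \<rho> ^ b \<longleftrightarrow> a mod N = b mod N"
proof
  assume "\<rho> ^ a = \<rho> ^ b"
  then have "\<rho> ^ (a mod N) = \<rho> ^ (b mod N)" by (simp add: power_mod_N)
  moreover have "a mod N < N" "b mod N < N" using two_n_le_N n_pos by auto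
  ultimately show "a mod N = b mod N" using inj_on_power by (auto simp: inj_on_def)
qed (metis power_mod_N)

text \<open>The cyclotomic class \<open>C(i)\<close>, without the bound on the exponent used in \<^const>\<open>cyc_class\<close>.\<close>
definition cclass :: "nat \<Rightarrow> 'a set" where
  "cclass i = {\<rho> ^ k | k. k mod n = i}"

lemma power_mem_cclass_iff: "\<rho> ^ k \<in> cclass i \<longleftrightarrow> k mod n = i"
proof
  assume "\<rho> ^ k \<in> cclass i"
  then obtain k' where "\<rho> ^ k = \<rho> ^ k'" "k' mod n = i"
    unfolding cclass_def by auto
  then show "k mod n = i" using n_dvd_N by (metis power_eq_power_iff mod_mod_cancel)
qed (auto simp: cclass_def)

lemma zero_notin_cclass: "0 \<notin> cclass i"
  unfolding cclass_def using rho_nonzero by auto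

lemma cclass_unique:
  assumes "x \<in> cclass i" "x \<in> cclass j"
  shows "i = j"
proof -
  obtain k where "x = \<rho> ^ k" using assms(1) unfolding cclass_def by blast
  then show ?thesis using assms by (simp add: power_mem_cclass_iff)
qed

lemma cclass_index_less: "x \<in> cclass i \<Longrightarrow> i < n"
  unfolding cclass_def using n_pos by auto

lemma mult_mem_cclass_iff:
  assumes y: "y \<in> cclass i" and j: "j < n"
  shows "y * u \<in> cclass j \<longleftrightarrow> u \<in> cclass ((j + n - i) mod n)"
proof (cases "u = 0")
  case True
  then show ?thesis using zero_notin_cclass by auto
next
  case False
  then obtain f where f: "u = \<rho> ^ f" using generator by blast
  obtain e where e: "y = \<rho> ^ e" "e mod n = i" using y unfolding cclass_def by auto
  have "y * u \<in> cclass j \<longleftrightarrow> (e mod n + f mod n) mod n = j"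
    by (simp only: e(1) f power_add[symmetric] power_mem_cclass_iff mod_add_eq)
  also have "\<dots> \<longleftrightarrow> f mod n = (j + n - e mod n) mod n"
    using n_pos j by (intro add_mod_eq_iff) auto
  finally show ?thesis using f e by (simp add: power_mem_cclass_iff)
qed

text \<open>Here \<open>2 n | q - 1\<close> is used: \<open>-1 = \<rho>^((q-1)/2)\<close> and \<open>n\<close> divides \<open>(q-1)/2\<close>.\<close>
lemma minus_one_mem_cclass_0: "- 1 \<in> cclass 0"
proof -
  obtain r where r: "N = 2 * n * r" using dvd_card by blast
  define e where "e = n * r"
  have "(\<rho> ^ e)\<^sup>2 = \<rho> ^ N"
    unfolding power_mult[symmetric] e_def r by (simp add: ac_simps)
  moreover have "\<rho> ^ e \<noteq> \<rho> ^ 0"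
    using r two_n_le_N n_pos by (simp only: power_eq_power_iff) (auto simp: e_def)
  ultimately have "\<rho> ^ e = - 1" using power_N power2_eq_1_iff by auto
  moreover have "\<rho> ^ e \<in> cclass 0" by (simp add: power_mem_cclass_iff e_def)
  ultimately show ?thesis by simp
qed

lemma uminus_mem_cclass: "y \<in> cclass i \<Longrightarrow> - y \<in> cclass i"
  using mult_mem_cclass_iff[OF minus_one_mem_cclass_0, of i "- y"] cclass_index_less by auto

lemma cyc_class_eq_cclass:
  assumes i: "i < n"
  shows "cyc_class n \<rho> i = cclass i"
proof -
  obtain r where r: "N = 2 * n * r" using dvd_card by blast
  have r_eq: "(CARD('a) - 1) div (2 * n) = r" using r n_pos N_eq by simp
  show ?thesis
  proof
    show "cyc_class n \<rho> i \<subseteq> cclass i"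
      unfolding cyc_class_def Let_def r_eq using i by (auto simp: power_mem_cclass_iff)
    show "cclass i \<subseteq> cyc_class n \<rho> i"
    proof
      fix x assume "x \<in> cclass i"
      then obtain k where k: "x = \<rho> ^ k" "k mod n = i" unfolding cclass_def by auto
      define k' where "k' = k mod N"
      have "k' mod n = i" using k n_dvd_N by (simp add: k'_def mod_mod_cancel)
      then have "x = \<rho> ^ (n * (k' div n) + i)"
        using k power_mod_N k'_def by (metis div_mult_mod_eq mult.commute)
      moreover have "k' < N" using two_n_le_N n_pos k'_def by simp
      then have "k' div n < 2 * r" using r n_pos
        by (metis div_less_iff_less_mult mult.commute mult.left_commute)
      ultimately show "x \<in> cyc_class n \<rho> i" unfolding cyc_class_def Let_def r_eq by blast
    qed
  qed
qed

lemma power_int_mem_cclass_iff: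
  assumes "i < n"
  shows "\<rho> powi j \<in> cclass i \<longleftrightarrow> [j = int i] (mod int n)"
proof -
  have N_pos: "int N > 0" using two_n_le_N n_pos by simp
  have "\<rho> powi j = \<rho> powi (j mod int N) * (\<rho> powi int N) powi (j div int N)"
    by (metis mod_mult_div_eq power_int_add power_int_mult rho_nonzero)
  also have "\<dots> = \<rho> ^ nat (j mod int N)"
    using N_pos N_eq finite_field_power_card_minus_one[OF rho_nonzero]
    by (simp add: power_int_of_nat[symmetric])
  finally have "\<rho> powi j \<in> cclass i \<longleftrightarrow> nat (j mod int N) mod n = i"
    by (simp add: power_mem_cclass_iff)
  also have "\<dots> \<longleftrightarrow> (j mod int N) mod int n = int i"
    using N_pos by (metis int_nat_eq nat_int of_nat_mod pos_mod_sign)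
  also have "\<dots> \<longleftrightarrow> [j = int i] (mod int n)"
    using n_dvd_N assms by (simp add: mod_mod_cancel cong_def)
  finally show ?thesis .
qed

lemma cyc_num_eq_card: "a < n \<Longrightarrow> b < n \<Longrightarrow> cyc_num n \<rho> a b = card {u \<in> cclass b. u - 1 \<in> cclass a}"
  unfolding cyc_num_def
  by (rule arg_cong[where f = card]) (force simp: cyc_class_eq_cclass)

lemma card_cclass_shift:
  assumes y0: "y0 \<in> cclass k" and i: "i < n" and j: "j < n"
  shows "card {y \<in> cclass i. y - y0 \<in> cclass j} = cyc_num n \<rho> ((j + n - k) mod n) ((i + n - k) mod n)"
proof -
  let ?U = "{u \<in> cclass ((i + n - k) mod n). u - 1 \<in> cclass ((j + n - k) mod n)}"
  have y0_nonzero: "y0 \<noteq> 0" using y0 zero_notin_cclass by blast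
  have "{y \<in> cclass i. y - y0 \<in> cclass j} = (*) y0 ` ?U"
  proof (intro set_eqI iffI)
    fix y assume "y \<in> {y \<in> cclass i. y - y0 \<in> cclass j}"
    moreover have "y = y0 * (y / y0)" "y - y0 = y0 * (y / y0 - 1)"
      using y0_nonzero by (simp_all add: algebra_simps)
    ultimately show "y \<in> (*) y0 ` ?U"
      using mult_mem_cclass_iff[OF y0 i] mult_mem_cclass_iff[OF y0 j]
      by (metis (mono_tags, lifting) image_eqI mem_Collect_eq)
  next
    fix y assume "y \<in> (*) y0 ` ?U"
    then obtain u where u: "u \<in> ?U" and y: "y = y0 * u" by blast
    moreover have "y - y0 = y0 * (u - 1)" by (simp add: y algebra_simps)
    ultimately show "y \<in> {y \<in> cclass i. y - y0 \<in> cclass j}"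
      using mult_mem_cclass_iff[OF y0 i] mult_mem_cclass_iff[OF y0 j] by simp
  qed
  moreover have "inj_on ((*) y0) ?U" using y0_nonzero by (auto simp: inj_on_def)
  ultimately show ?thesis using n_pos by (simp add: card_image cyc_num_eq_card)
qed

end

lemma zadd_Z2m: "z \<in> Z2m m \<Longrightarrow> w \<in> Z2m m \<Longrightarrow> zadd z w \<in> Z2m m"
  by (auto simp: zadd_def Z2m_def)

lemma zadd_eq_empty_iff: "zadd z w = {} \<longleftrightarrow> z = w"
  by (auto simp: zadd_def)

lemma zadd_eq_left_iff: "zadd z w = z \<longleftrightarrow> w = {}"
  by (auto simp: zadd_def)

lemma zadd_eq_right_iff: "zadd z w = w \<longleftrightarrow> z = {}"
  by (auto simp: zadd_def)

lemma zadd_mem_Z2m_star_iff: "z \<in> Z2m m \<Longrightarrow> w \<in> Z2m m \<Longrightarrow> zadd z w \<in> Z2m_star m \<longleftrightarrow> z \<noteq> w"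
  by (simp add: Z2m_star_def zadd_Z2m zadd_eq_empty_iff)

lemma finite_Z2m_star: "finite (Z2m_star m)"
  unfolding Z2m_star_def Z2m_def by simp

lemma gadd_mem_Gset: "l > 0 \<Longrightarrow> v \<in> Gset l m \<Longrightarrow> t \<in> Gset l m \<Longrightarrow> gadd l v t \<in> Gset l m"
  by (cases v; cases t) (simp add: Gset_def zadd_Z2m)

lemma gsub_gadd_cancel: "t \<in> Gset l m \<Longrightarrow> gsub l (gadd l v t) v = t"
  by (cases v; cases t) (auto simp: Gset_def zadd_def mod_diff_left_eq)

lemma gadd_gsub_cancel: "w \<in> Gset l m \<Longrightarrow> gadd l v (gsub l w v) = w"
  by (cases v; cases w) (auto simp: Gset_def zadd_def mod_add_right_eq)

lemma gsub_gadd_gadd: "gsub l (gadd l v t) (gadd l v s) = gsub l t s"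
  by (cases v; cases t; cases s) (auto simp: zadd_def mod_diff_eq)

lemma Spi_subset_Gset: "l > 0 \<Longrightarrow> Spi l m \<pi> \<rho> \<subseteq> Gset l m"
  by (auto simp: Spi_def S0_def Szpi_def Gset_def Z2m_star_def)

lemma induced_deg_gadd:
  assumes l: "l > 0" and v: "v \<in> Gset l m" and s: "s \<in> Spi l m \<pi> \<rho>"
  shows "induced_deg l m \<pi> \<rho> v (gadd l v s) = card {t \<in> Spi l m \<pi> \<rho>. gsub l t s \<in> Spi l m \<pi> \<rho>}"
proof -
  let ?S = "Spi l m \<pi> \<rho>"
  let ?D = "{t \<in> ?S. gsub l t s \<in> ?S}"
  have SG: "?S \<subseteq> Gset l m" using Spi_subset_Gset l .
  have "{w \<in> nbhd l m \<pi> \<rho> v. cay_adj l m \<pi> \<rho> (gadd l v s) w} = gadd l v ` ?D"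
  proof (intro set_eqI iffI)
    fix w assume "w \<in> {w \<in> nbhd l m \<pi> \<rho> v. cay_adj l m \<pi> \<rho> (gadd l v s) w}"
    then have "w \<in> Gset l m" "gsub l w v \<in> ?S" "gsub l w (gadd l v s) \<in> ?S"
      by (auto simp: nbhd_def cay_adj_def)
    then show "w \<in> gadd l v ` ?D"
      by (metis (no_types, lifting) gadd_gsub_cancel gsub_gadd_gadd image_eqI mem_Collect_eq)
  next
    fix w assume "w \<in> gadd l v ` ?D"
    then obtain t where t: "t \<in> ?D" and w: "w = gadd l v t" by blast
    have tG: "t \<in> Gset l m" using t SG by blast
    have "w \<in> Gset l m" "gadd l v s \<in> Gset l m" "gsub l w v = t"
      using w s SG gadd_mem_Gset[OF l v] gsub_gadd_cancel[OF tG] tG by blast+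
    then show "w \<in> {w \<in> nbhd l m \<pi> \<rho> v. cay_adj l m \<pi> \<rho> (gadd l v s) w}"
      using t v w gsub_gadd_gadd[of l v t s] by (simp add: nbhd_def cay_adj_def)
  qed
  moreover have "inj_on (gadd l v) ?D"
    by (rule inj_on_inverseI[where g = "\<lambda>w. gsub l w v"]) (use SG gsub_gadd_cancel in blast)
  ultimately show ?thesis unfolding induced_deg_def by (simp add: card_image)
qed

lemma card_S0:
  assumes "l > 0"
  shows "card (S0 l m :: (int \<times> nat set \<times> 'a::zero) set) = l * 2 ^ m - 1"
proof -
  let ?P = "{0..<int l} \<times> Pow {..<m} - {(0, {})}"
  have "(S0 l m :: (int \<times> nat set \<times> 'a) set) = (\<lambda>(a, z). (a, z, 0)) ` ?P"
    unfolding S0_def Z2m_def by auto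
  moreover have "inj_on (\<lambda>(a, z). (a, z, 0::'a)) ?P" by (auto simp: inj_on_def)
  ultimately show ?thesis
    using assms by (simp add: card_image card_Diff_singleton card_cartesian_product card_Pow)
qed

locale cayley_connection = cyclotomy n \<rho> N for n :: nat and \<rho> :: "'a::{field,finite}" and N +
  fixes l m :: nat and \<pi> :: "nat set \<Rightarrow> nat"
  assumes l_pos: "l > 0" and n_eq: "n = 2 ^ m - 1"
    and bij: "bij_betw \<pi> (Z2m_star m) {..<n}"
begin

lemma pi_less: "z \<in> Z2m_star m \<Longrightarrow> \<pi> z < n"
  using bij by (auto simp: bij_betw_def)

lemma cclass_pi_unique:
  "z \<in> Z2m_star m \<Longrightarrow> w \<in> Z2m_star m \<Longrightarrow> y \<in> cclass (\<pi> z) \<Longrightarrow> y \<in> cclass (\<pi> w) \<Longrightarrow> z = w"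
  using bij cclass_unique by (auto simp: bij_betw_def inj_on_def)

lemma mem_Szpi_iff:
  assumes h: "h \<in> Z2m_star m"
  shows "(a, z, y) \<in> Szpi m \<pi> \<rho> h \<longleftrightarrow> a = 0 \<and> z = h \<and> y \<in> cclass (\<pi> h)"
proof -
  have "(a, z, y) \<in> Szpi m \<pi> \<rho> h \<longleftrightarrow>
      a = 0 \<and> z = h \<and> (\<exists>j. y = \<rho> powi j \<and> [j = int (\<pi> h)] (mod int n))"
    unfolding Szpi_def n_eq by blast
  moreover have "(\<exists>j. y = \<rho> powi j \<and> [j = int (\<pi> h)] (mod int n)) \<longleftrightarrow> y \<in> cclass (\<pi> h)"
  proof
    assume "y \<in> cclass (\<pi> h)"
    then obtain k where "y = \<rho> powi int k" "k mod n = \<pi> h"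
      unfolding cclass_def by (auto simp: power_int_of_nat)
    moreover have "[int k = int (\<pi> h)] (mod int n)"
      using \<open>k mod n = \<pi> h\<close> pi_less[OF h] by (simp add: cong_def flip: of_nat_mod)
    ultimately show "\<exists>j. y = \<rho> powi j \<and> [j = int (\<pi> h)] (mod int n)" by blast
  next
    assume "\<exists>j. y = \<rho> powi j \<and> [j = int (\<pi> h)] (mod int n)"
    then show "y \<in> cclass (\<pi> h)" using power_int_mem_cclass_iff[OF pi_less[OF h]] by auto
  qed
  ultimately show ?thesis by simp
qed

lemma mem_Spi_iff:
  "(a, z, y) \<in> Spi l m \<pi> \<rho> \<longleftrightarrow>
    (if y = 0 then 0 \<le> a \<and> a < int l \<and> z \<in> Z2m m \<and> (a, z) \<noteq> (0, {})
     else a = 0 \<and> z \<in> Z2m_star m \<and> y \<in> cclass (\<pi> z))"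
proof -
  have "(a, z, y) \<in> S0 l m \<longleftrightarrow> y = 0 \<and> 0 \<le> a \<and> a < int l \<and> z \<in> Z2m m \<and> (a, z) \<noteq> (0, {})"
    unfolding S0_def by simp
  moreover have "(a, z, y) \<in> (\<Union>h \<in> Z2m_star m. Szpi m \<pi> \<rho> h) \<longleftrightarrow>
      a = 0 \<and> z \<in> Z2m_star m \<and> y \<in> cclass (\<pi> z)"
    by (simp add: mem_Szpi_iff)
  ultimately show ?thesis unfolding Spi_def Un_iff by (simp add: zero_notin_cclass)
qed

lemma mem_Spi_shift_S0_iff:
  assumes s: "(b, w, 0) \<in> S0 l m"
  shows "(c, w', y) \<in> Spi l m \<pi> \<rho> \<and> ((c - b) mod int l, zadd w' w, y) \<in> Spi l m \<pi> \<rho> \<longleftrightarrow>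
      (c, w', y) \<in> S0 l m \<and> (c, w', y) \<noteq> (b, w, 0)"
proof -
  have b: "0 \<le> b" "b < int l" and w: "w \<in> Z2m m" and s_nonzero: "(b, w) \<noteq> (0, {})"
    using s by (simp_all add: S0_def)
  show ?thesis
  proof (cases "y = 0")
    case True
    have "(c - b) mod int l = 0 \<and> zadd w' w = {} \<longleftrightarrow> c = b \<and> w' = w" if "0 \<le> c" "c < int l"
      using mod_diff_eq_0_iff[OF b that] by (simp add: zadd_eq_empty_iff)
    then show ?thesis
      using True b w l_pos by (auto simp: mem_Spi_iff S0_def zadd_Z2m)
  next
    case False
    have "\<not> ((c, w', y) \<in> Spi l m \<pi> \<rho> \<and> ((c - b) mod int l, zadd w' w, y) \<in> Spi l m \<pi> \<rho>)"
    proof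
      assume "(c, w', y) \<in> Spi l m \<pi> \<rho> \<and> ((c - b) mod int l, zadd w' w, y) \<in> Spi l m \<pi> \<rho>"
      then have c: "c = 0" "(c - b) mod int l = 0"
        and "w' \<in> Z2m_star m" "zadd w' w \<in> Z2m_star m" "y \<in> cclass (\<pi> w')" "y \<in> cclass (\<pi> (zadd w' w))"
        using False by (auto simp: mem_Spi_iff)
      then have "zadd w' w = w'" using cclass_pi_unique by metis
      moreover have "b = 0" using c mod_diff_eq_0_iff[of b "int l" c] b l_pos by simp
      ultimately show False using s_nonzero zadd_eq_left_iff by simp
    qed
    then show ?thesis using False by (simp add: S0_def)
  qed
qed

lemma Spi_inter_shift_S0:
  assumes s: "s \<in> S0 l m"
  shows "{t \<in> Spi l m \<pi> \<rho>. gsub l t s \<in> Spi l m \<pi> \<rho>} = S0 l m - {s}"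
proof (intro set_eqI)
  obtain b w where s_eq: "s = (b, w, 0)" using s unfolding S0_def by blast
  fix t :: "int \<times> nat set \<times> 'a"
  obtain c w' y where "t = (c, w', y)" by (cases t)
  then show "t \<in> {t \<in> Spi l m \<pi> \<rho>. gsub l t s \<in> Spi l m \<pi> \<rho>} \<longleftrightarrow> t \<in> S0 l m - {s}"
    using mem_Spi_shift_S0_iff[of b w c w' y] s by (simp add: s_eq)
qed

lemma mem_Spi_shift_Szpi_iff:
  assumes g: "g \<in> Z2m_star m" and y0: "y0 \<in> cclass (\<pi> g)"
  shows "(c, w, y) \<in> Spi l m \<pi> \<rho> \<and> (c mod int l, zadd w g, y - y0) \<in> Spi l m \<pi> \<rho> \<longleftrightarrow>
      c = 0 \<and> w \<in> Z2m_star m - {g} \<and> y \<in> cclass (\<pi> w) \<and> y - y0 \<in> cclass (\<pi> (zadd w g))"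
proof (cases "y = 0")
  case True
  have "\<not> ((c, w, y) \<in> Spi l m \<pi> \<rho> \<and> (c mod int l, zadd w g, y - y0) \<in> Spi l m \<pi> \<rho>)"
  proof
    assume A: "(c, w, y) \<in> Spi l m \<pi> \<rho> \<and> (c mod int l, zadd w g, y - y0) \<in> Spi l m \<pi> \<rho>"
    have "y0 \<noteq> 0" using y0 zero_notin_cclass by blast
    then have "0 \<le> c" "c < int l" "c mod int l = 0" "(c, w) \<noteq> (0, {})"
        and "zadd w g \<in> Z2m_star m" "- y0 \<in> cclass (\<pi> (zadd w g))"
      using A True by (simp_all add: mem_Spi_iff)
    then have "c = 0" "zadd w g = g"
      using cclass_pi_unique[OF _ g _ uminus_mem_cclass[OF y0]] mod_pos_pos_trivial by metis+
    then show False using \<open>(c, w) \<noteq> (0, {})\<close> zadd_eq_right_iff by simp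
  qed
  then show ?thesis using True zero_notin_cclass by blast
next
  case False
  then have y_nonzero: "y \<noteq> 0" .
  show ?thesis
  proof (cases "c = 0 \<and> w \<in> Z2m_star m \<and> y \<in> cclass (\<pi> w)")
    case True
    then have t: "c = 0" "w \<in> Z2m_star m" "y \<in> cclass (\<pi> w)" by simp_all
    have "w \<in> Z2m m" "g \<in> Z2m m" using t g by (simp_all add: Z2m_star_def)
    show ?thesis
    proof (cases "y = y0")
      case True
      then have "w = g" using t g y0 cclass_pi_unique by blast
      then show ?thesis using True y_nonzero by (simp add: mem_Spi_iff zadd_eq_empty_iff zero_notin_cclass)
    next
      case False
      then show ?thesis
        using y_nonzero t \<open>w \<in> Z2m m\<close> \<open>g \<in> Z2m m\<close> by (simp add: mem_Spi_iff zadd_mem_Z2m_star_iff)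
    qed
  next
    case False
    moreover from this have "(c, w, y) \<notin> Spi l m \<pi> \<rho>" using y_nonzero by (simp add: mem_Spi_iff)
    ultimately show ?thesis by blast
  qed
qed

lemma Spi_inter_shift_Szpi:
  assumes g: "g \<in> Z2m_star m" and y0: "y0 \<in> cclass (\<pi> g)"
  shows "{t \<in> Spi l m \<pi> \<rho>. gsub l t (0, g, y0) \<in> Spi l m \<pi> \<rho>} =
    (\<lambda>(h, y). (0, h, y)) ` (SIGMA h : Z2m_star m - {g}. {y \<in> cclass (\<pi> h). y - y0 \<in> cclass (\<pi> (zadd h g))})"
proof (intro set_eqI)
  fix t :: "int \<times> nat set \<times> 'a"
  obtain c w y where t: "t = (c, w, y)" by (cases t)
  have "t \<in> (\<lambda>(h, y). (0, h, y)) ` (SIGMA h : Z2m_star m - {g}. {y \<in> cclass (\<pi> h). y - y0 \<in> cclass (\<pi> (zadd h g))})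
      \<longleftrightarrow> c = 0 \<and> w \<in> Z2m_star m - {g} \<and> y \<in> cclass (\<pi> w) \<and> y - y0 \<in> cclass (\<pi> (zadd w g))"
    unfolding t by force
  then show "t \<in> {t \<in> Spi l m \<pi> \<rho>. gsub l t (0, g, y0) \<in> Spi l m \<pi> \<rho>} \<longleftrightarrow>
      t \<in> (\<lambda>(h, y). (0, h, y)) ` (SIGMA h : Z2m_star m - {g}. {y \<in> cclass (\<pi> h). y - y0 \<in> cclass (\<pi> (zadd h g))})"
    using mem_Spi_shift_Szpi_iff[OF g y0, of c w y] t by simp
qed

lemma card_Spi_inter_shift_Szpi:
  assumes g: "g \<in> Z2m_star m" and y0: "y0 \<in> cclass (\<pi> g)"
  shows "card {t \<in> Spi l m \<pi> \<rho>. gsub l t (0, g, y0) \<in> Spi l m \<pi> \<rho>} =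
    (\<Sum>h \<in> Z2m_star m - {g}. cyc_num n \<rho> ((\<pi> (zadd h g) + n - \<pi> g) mod n) ((\<pi> h + n - \<pi> g) mod n))"
proof -
  have "zadd h g \<in> Z2m_star m" if "h \<in> Z2m_star m - {g}" for h
  proof -
    have "h \<in> Z2m m" "g \<in> Z2m m" "h \<noteq> g" using that g by (auto simp: Z2m_star_def)
    then show ?thesis by (simp add: zadd_mem_Z2m_star_iff)
  qed
  then have card_fibre: "card {y \<in> cclass (\<pi> h). y - y0 \<in> cclass (\<pi> (zadd h g))} =
      cyc_num n \<rho> ((\<pi> (zadd h g) + n - \<pi> g) mod n) ((\<pi> h + n - \<pi> g) mod n)"
    if "h \<in> Z2m_star m - {g}" for h
    using that by (intro card_cclass_shift[OF y0] pi_less) auto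
  have "inj_on (\<lambda>(h, y). (0::int, h, y)) (SIGMA h : Z2m_star m - {g}. {y \<in> cclass (\<pi> h). y - y0 \<in> cclass (\<pi> (zadd h g))})"
    by (auto simp: inj_on_def)
  then have "card {t \<in> Spi l m \<pi> \<rho>. gsub l t (0, g, y0) \<in> Spi l m \<pi> \<rho>} =
      card (SIGMA h : Z2m_star m - {g}. {y \<in> cclass (\<pi> h). y - y0 \<in> cclass (\<pi> (zadd h g))})"
    unfolding Spi_inter_shift_Szpi[OF g y0] by (rule card_image)
  also have "\<dots> = (\<Sum>h \<in> Z2m_star m - {g}. card {y \<in> cclass (\<pi> h). y - y0 \<in> cclass (\<pi> (zadd h g))})"
    by (rule card_SigmaI) (simp_all add: finite_Z2m_star)
  also have "\<dots> = (\<Sum>h \<in> Z2m_star m - {g}. cyc_num n \<rho> ((\<pi> (zadd h g) + n - \<pi> g) mod n) ((\<pi> h + n - \<pi> g) mod n))"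
    using card_fibre by (rule sum.cong[OF refl])
  finally show ?thesis .
qed

end

theorem lemma2p3:
  fixes l m q :: nat and \<pi> :: "nat set \<Rightarrow> nat" and \<rho> :: "'a::{field,finite}"
    and v :: "int \<times> nat set \<times> 'a"
  assumes "l > 0" and "m > 0"
    and "bij_betw \<pi> (Z2m_star m) {..<2 ^ m - 1}"
    and "CARD('a) = q" and "[q = 1] (mod 2 * (2 ^ m - 1))"
    and "\<forall>x::'a. x \<noteq> 0 \<longrightarrow> (\<exists>k::nat. x = \<rho> ^ k)"
    and "v \<in> Gset l m"
  shows "(\<forall>s \<in> S0 l m. induced_deg l m \<pi> \<rho> v (gadd l v s) = 2 ^ m * l - 2)
       \<and> (\<forall>g \<in> Z2m_star m. \<forall>s \<in> Szpi m \<pi> \<rho> g.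
            induced_deg l m \<pi> \<rho> v (gadd l v s) =
              (\<Sum>h \<in> Z2m_star m - {g}.
                 cyc_num (2 ^ m - 1) \<rho>
                   ((\<pi> (zadd h g) + (2 ^ m - 1) - \<pi> g) mod (2 ^ m - 1))
                   ((\<pi> h + (2 ^ m - 1) - \<pi> g) mod (2 ^ m - 1))))"
proof -
  have "1 \<le> q" unfolding assms(4)[symmetric] by (simp add: Suc_leI)
  then have "2 * (2 ^ m - 1) dvd CARD('a) - 1" using assms(4,5) by (simp add: cong_altdef_nat)
  moreover have "(1::nat) < 2 ^ m" using power_increasing[of 1 m "2::nat"] assms(2) by simp
  ultimately interpret cayley_connection "2 ^ m - 1" \<rho> "CARD('a) - 1" l m \<pi>
    using assms by unfold_locales simp_all
  have "induced_deg l m \<pi> \<rho> v (gadd l v s) = 2 ^ m * l - 2" if s: "s \<in> S0 l m" for s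
  proof -
    have "s \<in> Spi l m \<pi> \<rho>" using s by (simp add: Spi_def)
    have "induced_deg l m \<pi> \<rho> v (gadd l v s) = card (S0 l m - {s})"
      unfolding induced_deg_gadd[OF l_pos assms(7) \<open>s \<in> Spi l m \<pi> \<rho>\<close>] Spi_inter_shift_S0[OF s] ..
    then show ?thesis using s by (simp add: card_Diff_singleton card_S0[OF l_pos] mult.commute)
  qed
  moreover have "induced_deg l m \<pi> \<rho> v (gadd l v s) =
      (\<Sum>h \<in> Z2m_star m - {g}. cyc_num (2 ^ m - 1) \<rho>
         ((\<pi> (zadd h g) + (2 ^ m - 1) - \<pi> g) mod (2 ^ m - 1)) ((\<pi> h + (2 ^ m - 1) - \<pi> g) mod (2 ^ m - 1)))"
    if g: "g \<in> Z2m_star m" and s: "s \<in> Szpi m \<pi> \<rho> g" for g s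
  proof -
    obtain y where s_eq: "s = (0, g, y)" and y: "y \<in> cclass (\<pi> g)"
      using s mem_Szpi_iff[OF g] by (cases s) auto
    have "s \<in> Spi l m \<pi> \<rho>" using g s by (auto simp: Spi_def)
    then have "induced_deg l m \<pi> \<rho> v (gadd l v s) = card {t \<in> Spi l m \<pi> \<rho>. gsub l t s \<in> Spi l m \<pi> \<rho>}"
      by (rule induced_deg_gadd[OF l_pos assms(7)])
    then show ?thesis unfolding s_eq card_Spi_inter_shift_Szpi[OF g y] .
  qed
  ultimately show ?thesis by blast
qed

end
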